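(* Let $W\in C^1(\mathbb{R})$ satisfy (W-i) there is $\eta>0$ with $W(s)\geq\eta s^2$ for $|s|\leq1$ and $W(s)\geq\eta$ for $|s|\geq1$; (W-ii) $W''(0)=1$; (W-iii) there are $M>0$, $\alpha\in[0,2)$ with $W(s)\leq M|s|^\alpha$ for all $s\geq0$. Let $\Lambda_*=\inf\left\{\frac{E(\mathbf{u})}{|C(\mathbf{u})|}:\mathbf{u}\in X,\ C(\mathbf{u})\neq0\right\}$. Then $\Lambda_*<1$.
   Context: $X=H^2(\mathbb{R})\times L^2(\mathbb{R})$ with elements $\mathbf{u}=(u,v)$; $E(\mathbf{u})=\frac12\int(v^2+u_{xx}^2)\,dx+\int W(u)\,dx$ and $C(\mathbf{u})=-\int v\,u_x\,dx$. *)

theory Defs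
  imports "HOL-Analysis.Analysis"
begin

definition test_function :: "(real \<Rightarrow> real) \<Rightarrow> bool" where
  "test_function \<phi> \<longleftrightarrow> (\<forall>n. (deriv ^^ n) \<phi> differentiable_on UNIV) \<and> bounded {x. \<phi> x \<noteq> 0}"

definition locally_integrable :: "(real \<Rightarrow> real) \<Rightarrow> bool" where
  "locally_integrable f \<longleftrightarrow> (\<forall>a b. set_integrable lborel {a..b} f)"

definition weak_deriv :: "(real \<Rightarrow> real) \<Rightarrow> (real \<Rightarrow> real) \<Rightarrow> bool" where
  "weak_deriv u g \<longleftrightarrow> locally_integrable u \<and> locally_integrable g \<and>
     (\<forall>\<phi>. test_function \<phi> \<longrightarrow>
        (LINT x|lborel. u x * deriv \<phi> x) = - (LINT x|lborel. g x * \<phi> x))"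

definition L2 :: "(real \<Rightarrow> real) \<Rightarrow> bool" where
  "L2 f \<longleftrightarrow> f \<in> borel_measurable lborel \<and> integrable lborel (\<lambda>x. (f x)\<^sup>2)"

definition H2 :: "(real \<Rightarrow> real) \<Rightarrow> (real \<Rightarrow> real) \<Rightarrow> (real \<Rightarrow> real) \<Rightarrow> bool" where
  "H2 u u1 u2 \<longleftrightarrow> L2 u \<and> L2 u1 \<and> L2 u2 \<and> weak_deriv u u1 \<and> weak_deriv u1 u2"

definition energy :: "(real \<Rightarrow> real) \<Rightarrow> (real \<Rightarrow> real) \<Rightarrow> (real \<Rightarrow> real) \<Rightarrow> (real \<Rightarrow> real) \<Rightarrow> ennreal" where
  "energy W u u2 v = (\<integral>\<^sup>+ x. ennreal (((v x)\<^sup>2 + (u2 x)\<^sup>2) / 2) \<partial>lborel)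
                     + (\<integral>\<^sup>+ x. ennreal (W (u x)) \<partial>lborel)"

definition momentum :: "(real \<Rightarrow> real) \<Rightarrow> (real \<Rightarrow> real) \<Rightarrow> real" where
  "momentum u1 v = - (LINT x|lborel. v x * u1 x)"

definition Lambda_star :: "(real \<Rightarrow> real) \<Rightarrow> ereal" where
  "Lambda_star W = Inf {enn2ereal (energy W u u2 v) / ereal \<bar>momentum u1 v\<bar> | u u1 u2 v.
       H2 u u1 u2 \<and> L2 v \<and> momentum u1 v \<noteq> 0}"

end

theory Submission
  imports Defs
begin

text \<open>
  Take the admissible pair \<open>(u, v) = (A \<phi>, A \<phi>')\<close> with the bump \<open>\<phi>(x) = (16 - x\<^sup>2)\<^sup>3\<close> on
  \<open>[-4, 4]\<close>. Then \<open>|C| = A\<^sup>2 \<integral> \<phi>'\<^sup>2\<close> while the quadratic part of the energy is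
  \<open>A\<^sup>2 (\<integral> \<phi>'\<^sup>2 + \<integral> \<phi>''\<^sup>2) / 2\<close>, and \<open>\<integral> \<phi>''\<^sup>2 < \<integral> \<phi>'\<^sup>2\<close> because the bump is wide.
  The potential part is \<open>O(A\<^sup>\<alpha>)\<close> by (W-iii), hence negligible for large amplitude \<open>A\<close>
  since \<open>\<alpha> < 2\<close>. Only (W-iii) is needed.
\<close>

lemma test_function_C1:
  assumes "test_function \<phi>"
  shows "(\<phi> has_real_derivative deriv \<phi> x) (at x)" "continuous_on UNIV (deriv \<phi>)"
proof -
  have "(deriv ^^ 0) \<phi> differentiable_on UNIV" "(deriv ^^ 1) \<phi> differentiable_on UNIV"
    using assms unfolding test_function_def by blast+
  then show "(\<phi> has_real_derivative deriv \<phi> x) (at x)" "continuous_on UNIV (deriv \<phi>)"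
    by (auto simp: DERIV_deriv_iff_real_differentiable differentiable_on_def
        intro: differentiable_imp_continuous_on)
qed

lemma integrable_truncation:
  fixes f :: "real \<Rightarrow> real"
  assumes "continuous_on {a..b} f"
  shows "integrable lborel (\<lambda>x. f x * indicator {a..b} x)"
  using borel_integrable_atLeastAtMost'[OF assms] by (simp add: set_integrable_def mult.commute)

lemma L2_truncation:
  fixes f :: "real \<Rightarrow> real"
  assumes "continuous_on {a..b} f"
  shows "L2 (\<lambda>x. f x * indicator {a..b} x)"
proof -
  have "(\<lambda>x. (f x * indicator {a..b} x)\<^sup>2) = (\<lambda>x. (f x)\<^sup>2 * indicator {a..b} x)"
    by (auto split: split_indicator)
  moreover have "integrable lborel (\<lambda>x. (f x)\<^sup>2 * indicator {a..b} x)"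
    using assms by (intro integrable_truncation continuous_intros)
  ultimately show ?thesis
    unfolding L2_def using integrable_truncation[OF assms] by (auto intro: borel_measurable_integrable)
qed

lemma locally_integrable_truncation:
  fixes f :: "real \<Rightarrow> real"
  assumes "continuous_on {a..b} f"
  shows "locally_integrable (\<lambda>x. f x * indicator {a..b} x)"
  unfolding locally_integrable_def set_integrable_def
  using integrable_mult_indicator[OF _ integrable_truncation[OF assms]] by simp

lemma weak_deriv_truncation:
  fixes P Q :: "real \<Rightarrow> real"
  assumes "a \<le> b" and P': "\<And>x. (P has_real_derivative Q x) (at x)" and "continuous_on UNIV Q"
    and "P a = 0" "P b = 0"
  shows "weak_deriv (\<lambda>x. P x * indicator {a..b} x) (\<lambda>x. Q x * indicator {a..b} x)"
  unfolding weak_deriv_def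
proof (intro conjI allI impI locally_integrable_truncation)
  have isCont_Q: "isCont Q x" for x
    using \<open>continuous_on UNIV Q\<close> continuous_on_eq_continuous_at by blast
  show "continuous_on {a..b} P"
    using P' by (intro DERIV_continuous_on) (auto intro: has_field_derivative_at_within)
  show "continuous_on {a..b} Q"
    using \<open>continuous_on UNIV Q\<close> by (rule continuous_on_subset) simp
  fix \<phi> :: "real \<Rightarrow> real"
  assume "test_function \<phi>"
  note \<phi>' = test_function_C1[OF this]
  have "isCont (deriv \<phi>) x" for x
    using \<phi>'(2) continuous_on_eq_continuous_at by blast
  then have "(LINT x|lborel. P x * deriv \<phi> x * indicator {a..b} x)
      = P b * \<phi> b - P a * \<phi> a - (LINT x|lborel. Q x * \<phi> x * indicator {a..b} x)"
    using \<open>a \<le> b\<close> isCont_Q P' \<phi>'(1) by (intro integral_by_parts) auto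
  then show "(LINT x|lborel. P x * indicator {a..b} x * deriv \<phi> x)
      = - (LINT x|lborel. Q x * indicator {a..b} x * \<phi> x)"
    using \<open>P a = 0\<close> \<open>P b = 0\<close> by (simp add: ac_simps)
qed

lemma H2_truncation:
  fixes P Q R :: "real \<Rightarrow> real"
  assumes "a \<le> b"
    and P': "\<And>x. (P has_real_derivative Q x) (at x)"
    and Q': "\<And>x. (Q has_real_derivative R x) (at x)" and "continuous_on UNIV R"
    and "P a = 0" "P b = 0" "Q a = 0" "Q b = 0"
  shows "H2 (\<lambda>x. P x * indicator {a..b} x) (\<lambda>x. Q x * indicator {a..b} x)
            (\<lambda>x. R x * indicator {a..b} x)"
proof -
  have "continuous_on UNIV P" "continuous_on UNIV Q"
    using P' Q' by (auto intro: DERIV_continuous_on has_field_derivative_at_within)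
  with assms show ?thesis
    unfolding H2_def
    by (intro conjI L2_truncation weak_deriv_truncation) (auto intro: continuous_on_subset)
qed

lemma Lambda_star_le:
  assumes "H2 u u1 u2" "L2 v" "momentum u1 v \<noteq> 0"
    and "energy W u u2 v \<le> ennreal E" "0 \<le> E"
  shows "Lambda_star W \<le> ereal (E / \<bar>momentum u1 v\<bar>)"
proof -
  have "Lambda_star W \<le> enn2ereal (energy W u u2 v) / ereal \<bar>momentum u1 v\<bar>"
    unfolding Lambda_star_def using assms(1-3) by (intro Inf_lower) blast
  also have "\<dots> \<le> ereal E / ereal \<bar>momentum u1 v\<bar>"
    using assms(3-5) by (intro ereal_divide_right_mono) (auto simp: less_eq_ennreal.rep_eq)
  finally show ?thesis
    using assms(3) by simp
qed

lemma ex_pos_powr_less_square: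
  fixes C \<alpha> :: real
  assumes "\<alpha> < 2"
  shows "\<exists>A>0. C * A powr \<alpha> < A\<^sup>2"
proof -
  define B where "B = \<bar>C\<bar> + 1"
  define A where "A = B powr (1 / (2 - \<alpha>))"
  have "B > 0" "A > 0"
    unfolding A_def B_def by simp_all
  have "A\<^sup>2 = A powr \<alpha> * A powr (2 - \<alpha>)"
    using \<open>A > 0\<close> by (simp add: powr_numeral flip: powr_add)
  also have "A powr (2 - \<alpha>) = B"
    unfolding A_def using \<open>B > 0\<close> assms by (simp add: powr_powr)
  finally have "A\<^sup>2 = A powr \<alpha> * B" .
  moreover have "C * A powr \<alpha> < A powr \<alpha> * B"
    using \<open>A > 0\<close> unfolding B_def by (simp add: mult.commute mult_strict_left_mono)
  ultimately show ?thesis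
    using \<open>A > 0\<close> by auto
qed

definition bump :: "real \<Rightarrow> real" where
  "bump x = (16 - x\<^sup>2) ^ 3"

definition bump' :: "real \<Rightarrow> real" where
  "bump' x = - 6 * x * (16 - x\<^sup>2)\<^sup>2"

definition bump'' :: "real \<Rightarrow> real" where
  "bump'' x = 24 * x\<^sup>2 * (16 - x\<^sup>2) - 6 * (16 - x\<^sup>2)\<^sup>2"

lemma DERIV_bump: "(bump has_real_derivative bump' x) (at x)"
  unfolding bump_def bump'_def
  by (rule derivative_eq_intros refl)+ (simp add: algebra_simps power2_eq_square)

lemma DERIV_bump': "(bump' has_real_derivative bump'' x) (at x)"
  unfolding bump'_def bump''_def
  by (rule derivative_eq_intros refl)+ (simp add: algebra_simps power2_eq_square)

lemma continuous_on_bump'': "continuous_on S bump''"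
  unfolding bump''_def by (intro continuous_intros)

lemma bump_bounds:
  assumes "\<bar>x\<bar> \<le> 4"
  shows "0 \<le> bump x" "bump x \<le> 4096"
proof -
  have "x\<^sup>2 \<le> 4\<^sup>2"
    using assms by (metis abs_le_square_iff abs_numeral)
  then have "0 \<le> 16 - x\<^sup>2" "16 - x\<^sup>2 \<le> 16"
    by simp_all
  then show "0 \<le> bump x" "bump x \<le> 4096"
    unfolding bump_def using power_mono[of "16 - x\<^sup>2" 16 3] by simp_all
qed

lemma has_bochner_integral_bump'_sq:
  "has_bochner_integral lborel (\<lambda>x. (bump' x)\<^sup>2 * indicator {-4..4} x) (4294967296 / 385)"
proof -
  let ?F = "\<lambda>x::real. 786432 * x^3 - 589824/5 * x^5 + 55296/7 * x^7 - 256 * x^9 + 36/11 * x^11"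
  have "(?F has_real_derivative (bump' x)\<^sup>2) (at x)" for x
    unfolding bump'_def
    by (rule derivative_eq_intros refl)+ (simp add: algebra_simps power2_eq_square power_numeral_reduce)
  then show ?thesis
    using has_bochner_integral_FTC_Icc_real[of "-4" 4 ?F "\<lambda>x. (bump' x)\<^sup>2"]
    unfolding bump'_def by (simp add: continuous_intros)
qed

lemma has_bochner_integral_bump''_sq:
  "has_bochner_integral lborel (\<lambda>x. (bump'' x)\<^sup>2 * indicator {-4..4} x) (268435456 / 35)"
proof -
  let ?F = "\<lambda>x::real. 2359296 * x - 589824 * x^3 + 423936/5 * x^5 - 34560/7 * x^7 + 100 * x^9"
  have "(?F has_real_derivative (bump'' x)\<^sup>2) (at x)" for x
    unfolding bump''_def
    by (rule derivative_eq_intros refl)+ (simp add: algebra_simps power2_eq_square power_numeral_reduce)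
  then show ?thesis
    using has_bochner_integral_FTC_Icc_real[of "-4" 4 ?F "\<lambda>x. (bump'' x)\<^sup>2"]
    unfolding bump''_def by (simp add: continuous_intros)
qed

lemma momentum_scaled_bump:
  "momentum (\<lambda>x. A * bump' x * indicator {-4..4} x) (\<lambda>x. A * bump' x * indicator {-4..4} x)
     = - (A\<^sup>2 * (4294967296 / 385))"
proof -
  have "has_bochner_integral lborel (\<lambda>x. A\<^sup>2 * ((bump' x)\<^sup>2 * indicator {-4..4} x))
          (A\<^sup>2 * (4294967296 / 385))"
    by (intro has_bochner_integral_mult_right has_bochner_integral_bump'_sq)
  then have "has_bochner_integral lborel
      (\<lambda>x. A * bump' x * indicator {-4..4} x * (A * bump' x * indicator {-4..4} x))
      (A\<^sup>2 * (4294967296 / 385))"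
    by (rule has_bochner_integral_cong[THEN iffD1, rotated 3])
       (auto simp: power2_eq_square split: split_indicator)
  then show ?thesis
    unfolding momentum_def by (simp add: has_bochner_integral_integral_eq)
qed

lemma kinetic_energy_scaled_bump:
  "(\<integral>\<^sup>+ x. ennreal (((A * bump' x * indicator {-4..4} x)\<^sup>2
                   + (A * bump'' x * indicator {-4..4} x)\<^sup>2) / 2) \<partial>lborel)
     = ennreal (A\<^sup>2 * (4294967296 / 385 + 268435456 / 35) / 2)"
proof -
  have "has_bochner_integral lborel
      (\<lambda>x. A\<^sup>2 / 2 * ((bump' x)\<^sup>2 * indicator {-4..4} x) + A\<^sup>2 / 2 * ((bump'' x)\<^sup>2 * indicator {-4..4} x))
      (A\<^sup>2 / 2 * (4294967296 / 385) + A\<^sup>2 / 2 * (268435456 / 35))"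
    by (intro has_bochner_integral_add has_bochner_integral_mult_right
        has_bochner_integral_bump'_sq has_bochner_integral_bump''_sq)
  then have "has_bochner_integral lborel
      (\<lambda>x. ((A * bump' x * indicator {-4..4} x)\<^sup>2 + (A * bump'' x * indicator {-4..4} x)\<^sup>2) / 2)
      (A\<^sup>2 * (4294967296 / 385 + 268435456 / 35) / 2)" (is "has_bochner_integral _ ?f ?I")
    by (rule has_bochner_integral_cong[THEN iffD1, rotated 3])
       (auto simp: power_mult_distrib algebra_simps split: split_indicator)
  note kinetic = this
  have "(\<integral>\<^sup>+ x. ennreal (?f x) \<partial>lborel) = ennreal (integral\<^sup>L lborel ?f)"
    using integrable.intros[OF kinetic] by (intro nn_integral_eq_integral) auto
  also have "integral\<^sup>L lborel ?f = ?I"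
    using kinetic by (rule has_bochner_integral_integral_eq)
  finally show ?thesis .
qed

lemma potential_energy_scaled_bump_le:
  assumes "0 \<le> A" "0 \<le> M" "0 \<le> \<alpha>" and W: "\<And>s. 0 \<le> s \<Longrightarrow> W s \<le> M * s powr \<alpha>"
  shows "(\<integral>\<^sup>+ x. ennreal (W (A * bump x * indicator {-4..4} x)) \<partial>lborel)
           \<le> ennreal (8 * (M * (4096 * A) powr \<alpha>))"
proof -
  have "ennreal (W (A * bump x * indicator {-4..4} x))
          \<le> ennreal (M * (4096 * A) powr \<alpha>) * indicator {-4..4} x" for x :: real
  proof (cases "x \<in> {-4..4}")
    case True
    then have "0 \<le> bump x" "bump x \<le> 4096"
      using bump_bounds by auto
    have "0 \<le> A * bump x"
      using assms(1) \<open>0 \<le> bump x\<close> by simp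
    then have "W (A * bump x) \<le> M * (A * bump x) powr \<alpha>"
      by (rule W)
    also have "\<dots> \<le> M * (4096 * A) powr \<alpha>"
      using \<open>0 \<le> A * bump x\<close> \<open>bump x \<le> 4096\<close> assms(1-3)
      by (intro mult_left_mono powr_mono2) (auto simp: mult.commute[of 4096] intro: mult_left_mono)
    finally have "W (A * bump x) \<le> M * (4096 * A) powr \<alpha>" .
    then show ?thesis
      using True by (simp add: ennreal_leI)
  next
    case False
    then show ?thesis
      using W[of 0] by (simp add: ennreal_neg)
  qed
  then have "(\<integral>\<^sup>+ x. ennreal (W (A * bump x * indicator {-4..4} x)) \<partial>lborel)
      \<le> (\<integral>\<^sup>+ x. ennreal (M * (4096 * A) powr \<alpha>) * indicator {-4..4::real} x \<partial>lborel)"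
    by (rule nn_integral_mono)
  also have "\<dots> = ennreal (8 * (M * (4096 * A) powr \<alpha>))"
    using assms(2) by (simp add: nn_integral_cmult_indicator ennreal_mult mult.commute[of 8])
  finally show ?thesis .
qed

theorem lemma4:
  fixes W W' :: "real \<Rightarrow> real"
  assumes C1: "\<And>s. (W has_real_derivative W' s) (at s)" "continuous_on UNIV W'"
    and Wi: "\<exists>\<eta>>0. (\<forall>s. \<bar>s\<bar> \<le> 1 \<longrightarrow> W s \<ge> \<eta> * s\<^sup>2) \<and> (\<forall>s. \<bar>s\<bar> \<ge> 1 \<longrightarrow> W s \<ge> \<eta>)"
    and Wii: "(W' has_real_derivative 1) (at 0)"
    and Wiii: "\<exists>M>0. \<exists>\<alpha>. 0 \<le> \<alpha> \<and> \<alpha> < 2 \<and> (\<forall>s\<ge>0. W s \<le> M * s powr \<alpha>)"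
  shows "Lambda_star W < 1"
proof -
  obtain M \<alpha> where "0 < M" "0 \<le> \<alpha>" "\<alpha> < 2" and W: "\<And>s. 0 \<le> s \<Longrightarrow> W s \<le> M * s powr \<alpha>"
    using Wiii by blast
  obtain A where "0 < A" and A: "16 * M * 4096 powr \<alpha> * A powr \<alpha> < A\<^sup>2"
    using ex_pos_powr_less_square[OF \<open>\<alpha> < 2\<close>] by blast
  let ?u = "\<lambda>x. A * bump x * indicator {-4..4} x"
  let ?u1 = "\<lambda>x. A * bump' x * indicator {-4..4} x"
  let ?u2 = "\<lambda>x. A * bump'' x * indicator {-4..4} x"
  define K where "K = A\<^sup>2 * (4294967296 / 385 + 268435456 / 35) / 2"
  define U where "U = 8 * (M * (4096 * A) powr \<alpha>)"
  have H2: "H2 ?u ?u1 ?u2"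
    by (rule H2_truncation[OF _ DERIV_cmult[OF DERIV_bump] DERIV_cmult[OF DERIV_bump']])
       (auto intro: continuous_intros continuous_on_bump'' simp: bump_def bump'_def)
  have "energy W ?u ?u2 ?u1 \<le> ennreal K + ennreal U"
    unfolding energy_def K_def U_def kinetic_energy_scaled_bump
    using potential_energy_scaled_bump_le[OF _ _ _ W] \<open>0 < A\<close> \<open>0 < M\<close> \<open>0 \<le> \<alpha>\<close>
    by (intro add_left_mono) simp
  also have "\<dots> = ennreal (K + U)"
    unfolding K_def U_def using \<open>0 < M\<close> by (intro ennreal_plus[symmetric]) simp_all
  finally have "Lambda_star W \<le> ereal ((K + U) / \<bar>momentum ?u1 ?u1\<bar>)"
    using H2 \<open>0 < A\<close> \<open>0 < M\<close>
    by (intro Lambda_star_le) (auto simp: H2_def momentum_scaled_bump K_def U_def)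
  also have "\<dots> < 1"
  proof -
    have "16 * (M * (4096 * A) powr \<alpha>) < A\<^sup>2"
      using A \<open>0 < A\<close> by (simp add: powr_mult mult.assoc)
    moreover have "0 \<le> M * (4096 * A) powr \<alpha>"
      using \<open>0 < M\<close> by simp
    ultimately have "K + U < A\<^sup>2 * (4294967296 / 385)"
      unfolding K_def U_def by simp
    then show ?thesis
      using \<open>0 < A\<close> by (simp add: momentum_scaled_bump)
  qed
  finally show ?thesis .
qed

end
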